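(* Let $G$ be a group, $H$ a finite index normal subgroup of $G$, $K$ a normal subgroup of $G$, and $g\in H$. Suppose $g$ has a minimal root $a$ in $G$ with respect to $K$, and let $\psi:G\to G/H$ be the quotient map. Then \[\nu(g;H,K\cap H)\ge \frac{\nu(g;G,K)}{o(\psi(a),G/H)}.\]
   Context: For a group $G$, a normal subgroup $K$ and $g\in G$, with $\pi:G\to G/K$ the quotient map: if $g\in K$, $\nu(g;G,K)$ is the supremum of the orders $o(\pi(a),G/K)$ over all $a\in G$ with $a^n=g$ for some integer $n$; if $g\notin K$, $\nu(g;G,K)$ is the supremum of all non-zero integers $n$ such that $g=a^n$ for some $a\in G$. When $\nu(g;G,K)$ is finite, a minimal root of $g$ in $G$ with respect to $K$ is an element $a\in G$ attaining this supremum (i.e. $a^n=g$ for some $n$ and $o(\pi(a),G/K)=\nu(g;G,K)$ if $g\in K$; $a^{\nu(g;G,K)}=g$ if $g\notin K$). $\nu(g;H,K\cap H)$ is defined in the same way inside $H$. $o(x,Q)$ denotes the order of $x$ in the group $Q$. *)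

theory Defs
  imports "HOL-Algebra.Algebra" "HOL-Library.Extended_Real"
begin

text \<open>Order of an element as an extended real: infinite order is \<infinity>
  (group.ord returns 0 in that case).\<close>
definition ord_e :: "('a, 'b) monoid_scheme \<Rightarrow> 'a \<Rightarrow> ereal" where
  "ord_e G x = (if group.ord G x = 0 then \<infinity> else ereal (real (group.ord G x)))"

text \<open>\<nu>(g;G,K), with \<pi>(a) = K #> a in G Mod K.\<close>
definition nu :: "('a, 'b) monoid_scheme \<Rightarrow> 'a set \<Rightarrow> 'a \<Rightarrow> ereal" where
  "nu G K g =
     (if g \<in> K
      then Sup {ord_e (G Mod K) (K #>\<^bsub>G\<^esub> a) | a. a \<in> carrier G \<and> (\<exists>n::int. a [^]\<^bsub>G\<^esub> n = g)}
      else Sup {ereal (real_of_int n) | n::int. n \<noteq> 0 \<and> (\<exists>a\<in>carrier G. a [^]\<^bsub>G\<^esub> n = g)})"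

definition min_root :: "('a, 'b) monoid_scheme \<Rightarrow> 'a set \<Rightarrow> 'a \<Rightarrow> 'a \<Rightarrow> bool" where
  "min_root G K g a \<longleftrightarrow>
     a \<in> carrier G \<and> \<bar>nu G K g\<bar> \<noteq> \<infinity> \<and>
     (if g \<in> K
      then (\<exists>n::int. a [^]\<^bsub>G\<^esub> n = g) \<and> ord_e (G Mod K) (K #>\<^bsub>G\<^esub> a) = nu G K g
      else (\<exists>n::int. ereal (real_of_int n) = nu G K g \<and> a [^]\<^bsub>G\<^esub> n = g))"

end

theory Submission
  imports Defs
begin

text \<open>Let m be the order of aH in the finite group G/H. Every exponent n with a^n \<in> H is
  a multiple of m, so b = a^m lies in H and g = b^(n/m) there. If g \<notin> K, this root bounds
  \<nu>(g;H,K\<inter>H) from below by n/m directly. If g \<in> K, the order of b(K\<inter>H) in H/(K\<inter>H) equals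
  that of bK = (aK)^m in G/K, which is at least o(aK)/m.\<close>

lemma (in normal) rcos_nat_pow:
  "x \<in> carrier G \<Longrightarrow> (H #> x) [^]\<^bsub>G Mod H\<^esub> (k::nat) = H #> (x [^] k)"
  using hom_nat_pow[OF r_coset_hom_Mod _ is_group factorgroup_is_group] by simp

lemma (in normal) rcos_int_pow:
  "x \<in> carrier G \<Longrightarrow> (H #> x) [^]\<^bsub>G Mod H\<^esub> (k::int) = H #> (x [^] k)"
  using hom_int_pow[OF r_coset_hom_Mod _ is_group factorgroup_is_group] by simp

lemma (in normal) rcos_eq_self_iff:
  "y \<in> carrier G \<Longrightarrow> H #> y = H \<longleftrightarrow> y \<in> H"
  by (metis is_group rcos_const rcos_self subgroup_axioms)

lemma (in normal) rcos_in_Mod: "x \<in> carrier G \<Longrightarrow> H #> x \<in> carrier (G Mod H)"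
  by (simp add: FactGroup_def rcosetsI subset)

lemma (in normal) nat_pow_mem_iff_ord_rcos_dvd:
  assumes "x \<in> carrier G"
  shows "x [^] (k::nat) \<in> H \<longleftrightarrow> group.ord (G Mod H) (H #> x) dvd k"
  using group.pow_eq_id[OF factorgroup_is_group rcos_in_Mod[OF assms], of k]
  by (simp add: assms rcos_nat_pow rcos_eq_self_iff)

lemma (in normal) int_pow_mem_iff_ord_rcos_dvd:
  assumes "x \<in> carrier G"
  shows "x [^] (k::int) \<in> H \<longleftrightarrow> int (group.ord (G Mod H) (H #> x)) dvd k"
  using group.int_pow_eq_id[OF factorgroup_is_group rcos_in_Mod[OF assms], of k]
  by (simp add: assms rcos_int_pow rcos_eq_self_iff)

lemma (in normal) pow_ord_rcos_mem:
  "x \<in> carrier G \<Longrightarrow> x [^] group.ord (G Mod H) (H #> x) \<in> H"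
  by (simp add: nat_pow_mem_iff_ord_rcos_dvd)

lemma (in normal) subgroup_root_of_int_pow_mem:
  assumes x: "x \<in> carrier G" and "x [^] (n::int) \<in> H"
  obtains k where "n = int (group.ord (G Mod H) (H #> x)) * k"
    and "(x [^] group.ord (G Mod H) (H #> x)) [^]\<^bsub>G\<lparr>carrier := H\<rparr>\<^esub> k = x [^] n"
proof -
  let ?m = "group.ord (G Mod H) (H #> x)"
  obtain k where k: "n = int ?m * k"
    using assms int_pow_mem_iff_ord_rcos_dvd by blast
  have "(x [^] ?m) [^] k = x [^] n"
    by (simp add: k x int_pow_pow flip: int_pow_int)
  then show thesis
    using that[OF k] int_pow_consistent[OF subgroup_axioms pow_ord_rcos_mem[OF x]] by simp
qed

lemma (in normal) ord_rcos_Int_subgroup: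
  assumes J: "subgroup J G" and b: "b \<in> J"
  shows "group.ord (G\<lparr>carrier := J\<rparr> Mod (H \<inter> J)) ((H \<inter> J) #>\<^bsub>G\<lparr>carrier := J\<rparr>\<^esub> b)
       = group.ord (G Mod H) (H #> b)"
proof -
  interpret HJ: normal "H \<inter> J" "G\<lparr>carrier := J\<rparr>"
    using normal_Int_subgroup[OF J] normal_axioms by blast
  have bJ: "b \<in> carrier (G\<lparr>carrier := J\<rparr>)" and bG: "b \<in> carrier G"
    using b subgroup.mem_carrier[OF J] by auto
  have "b [^]\<^bsub>G\<lparr>carrier := J\<rparr>\<^esub> k \<in> H \<inter> J \<longleftrightarrow> b [^] k \<in> H" for k :: nat
    using nat_pow_consistent[of b k J] HJ.nat_pow_closed[OF bJ, of k] by auto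
  then show ?thesis
    using HJ.nat_pow_mem_iff_ord_rcos_dvd[OF bJ] nat_pow_mem_iff_ord_rcos_dvd[OF bG]
    by (metis dvd_antisym dvd_refl)
qed

lemma (in group) ord_e_div_le_ord_e_pow:
  assumes x: "x \<in> carrier G" and k: "0 < k"
  shows "ord_e G x / ereal (real k) \<le> ord_e G (x [^] k)"
proof (cases "ord (x [^] k) = 0")
  case True
  then show ?thesis by (simp add: ord_e_def)
next
  case False
  have "ord x dvd k * ord (x [^] k)"
    by (metis x pow_ord_eq_1 pow_eq_id nat_pow_closed nat_pow_pow)
  with False k have "ord x \<noteq> 0" "ord x \<le> k * ord (x [^] k)"
    by (auto simp: dvd_imp_le) (metis dvd_0_left_iff mult_is_0 neq0_conv)
  then have "real (ord x) / real k \<le> real (ord (x [^] k))"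
    using k by (simp add: divide_le_eq mult.commute flip: of_nat_mult)
  then show ?thesis
    using False \<open>ord x \<noteq> 0\<close> k by (simp add: ord_e_def)
qed

lemma ord_e_le_nu:
  assumes "g \<in> K" "a \<in> carrier G" "a [^]\<^bsub>G\<^esub> (n::int) = g"
  shows "ord_e (G Mod K) (K #>\<^bsub>G\<^esub> a) \<le> nu G K g"
  unfolding nu_def using assms by (auto intro!: Sup_upper)

lemma exponent_le_nu:
  assumes "g \<notin> K" "n \<noteq> 0" "a \<in> carrier G" "a [^]\<^bsub>G\<^esub> (n::int) = g"
  shows "ereal (real_of_int n) \<le> nu G K g"
  unfolding nu_def using assms by (auto intro!: Sup_upper)

lemma (in normal) ord_e_div_ord_rcos_le_nu_Int:
  assumes K: "K \<lhd> G" and g: "g \<in> H" "g \<in> K"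
    and a: "a \<in> carrier G" "a [^] (n::int) = g"
    and m: "0 < group.ord (G Mod H) (H #> a)"
  shows "ord_e (G Mod K) (K #> a) / ereal (real (group.ord (G Mod H) (H #> a)))
    \<le> nu (G\<lparr>carrier := H\<rparr>) (K \<inter> H) g"
proof -
  interpret K: normal K G by fact
  let ?m = "group.ord (G Mod H) (H #> a)"
  let ?b = "a [^] ?m"
  have b: "?b \<in> H" using pow_ord_rcos_mem[OF a(1)] .
  have "a [^] n \<in> H" unfolding a(2) by (rule g(1))
  then obtain k where "n = int ?m * k" and k: "?b [^]\<^bsub>G\<lparr>carrier := H\<rparr>\<^esub> k = a [^] n"
    by (rule subgroup_root_of_int_pow_mem[OF a(1)])
  have "ord_e (G Mod K) (K #> a) / ereal (real ?m) \<le> ord_e (G Mod K) ((K #> a) [^]\<^bsub>G Mod K\<^esub> ?m)"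
    using group.ord_e_div_le_ord_e_pow[OF K.factorgroup_is_group K.rcos_in_Mod[OF a(1)] m] .
  also have "\<dots> = ord_e (G Mod K) (K #> ?b)"
    using K.rcos_nat_pow a by simp
  also have "\<dots> = ord_e (G\<lparr>carrier := H\<rparr> Mod (K \<inter> H)) ((K \<inter> H) #>\<^bsub>G\<lparr>carrier := H\<rparr>\<^esub> ?b)"
    unfolding ord_e_def K.ord_rcos_Int_subgroup[OF subgroup_axioms b] ..
  also have "\<dots> \<le> nu (G\<lparr>carrier := H\<rparr>) (K \<inter> H) g"
    using ord_e_le_nu[OF _ _ k] b g a(2) by simp
  finally show ?thesis .
qed

lemma (in normal) exponent_div_ord_rcos_le_nu_Int:
  assumes g: "g \<in> H" "g \<notin> K" and a: "a \<in> carrier G" "a [^] (n::int) = g" and n: "n \<noteq> 0"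
  shows "ereal (real_of_int n) / ereal (real (group.ord (G Mod H) (H #> a)))
    \<le> nu (G\<lparr>carrier := H\<rparr>) (K \<inter> H) g"
proof -
  let ?m = "group.ord (G Mod H) (H #> a)"
  have "a [^] n \<in> H" unfolding a(2) by (rule g(1))
  then obtain k where nk: "n = int ?m * k" and k: "(a [^] ?m) [^]\<^bsub>G\<lparr>carrier := H\<rparr>\<^esub> k = a [^] n"
    by (rule subgroup_root_of_int_pow_mem[OF a(1)])
  with n have "?m \<noteq> 0" "k \<noteq> 0" by auto
  then have "ereal (real_of_int n) / ereal (real ?m) = ereal (real_of_int k)"
    by (simp add: nk)
  also have "\<dots> \<le> nu (G\<lparr>carrier := H\<rparr>) (K \<inter> H) g"
    using exponent_le_nu[OF _ \<open>k \<noteq> 0\<close> _ k] pow_ord_rcos_mem[OF a(1)] g a(2) by simp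
  finally show ?thesis .
qed

theorem mainTheorem13:
  fixes G :: "('a, 'b) monoid_scheme" and H K :: "'a set" and g a :: 'a
  assumes "group G"
    and "H \<lhd> G"
    and "finite (carrier (G Mod H))"
    and "K \<lhd> G"
    and "g \<in> H"
    and "min_root G K g a"
  shows "nu (G\<lparr>carrier := H\<rparr>) (K \<inter> H) g \<ge> nu G K g / ord_e (G Mod H) (H #>\<^bsub>G\<^esub> a)"
proof -
  interpret normal H G by fact
  have a: "a \<in> carrier G" using assms(6) by (simp add: min_root_def)
  have m: "0 < group.ord (G Mod H) (H #>\<^bsub>G\<^esub> a)"
    using group.ord_ge_1[OF factorgroup_is_group assms(3) rcos_in_Mod[OF a]] by simp
  then have ord_e_m: "ord_e (G Mod H) (H #>\<^bsub>G\<^esub> a) = ereal (real (group.ord (G Mod H) (H #>\<^bsub>G\<^esub> a)))"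
    by (simp add: ord_e_def)
  show ?thesis
  proof (cases "g \<in> K")
    case True
    with assms(6) obtain n :: int
      where n: "a [^]\<^bsub>G\<^esub> n = g" "nu G K g = ord_e (G Mod K) (K #>\<^bsub>G\<^esub> a)"
      unfolding min_root_def by auto
    show ?thesis
      using ord_e_div_ord_rcos_le_nu_Int[OF assms(4) assms(5) True a n(1) m] n(2) ord_e_m by simp
  next
    case False
    with assms(6) obtain n :: int where n: "a [^]\<^bsub>G\<^esub> n = g" "nu G K g = ereal (real_of_int n)"
      unfolding min_root_def by auto
    have "n \<noteq> 0"
      using n(1) False subgroup.one_closed[OF normal_imp_subgroup[OF assms(4)]] by auto
    show ?thesis
      using exponent_div_ord_rcos_le_nu_Int[OF assms(5) False a n(1) \<open>n \<noteq> 0\<close>] n(2) ord_e_m by simp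
  qed
qed

end
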